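(* Let $Q$ be a quiver without oriented cycles and $\mathbf{1}$ the dimension vector with $\mathbf{1}(x)=1$ for all $x\in Q_0$. For every $W\in\operatorname{Rep}(Q,\mathbf{1})$, the orbit semigroup $S(W)$ is saturated.
   Context: Work over an algebraically closed field $k$ of characteristic zero. $\operatorname{Rep}(Q,\mathbf{1})=k^{Q_1}$ with the torus $\operatorname{GL}(\mathbf{1})=(k^* )^{Q_0}$ acting by $(g\cdot W)(a)=g(ha)W(a)g(ta)^{-1}$. For $\sigma\in\mathbb{Z}^{Q_0}$, $\operatorname{SI}(Q,\mathbf{1})_\sigma$ is the space of polynomial functions $f$ with $g\cdot f=\sigma(g)f$, $\sigma(g)=\prod_xg(x)^{\sigma(x)}$, and $S(W)=\{\sigma\in\mathbb{Z}^{Q_0}\mid\exists f\in\operatorname{SI}(Q,\mathbf{1})_\sigma,\ f(W)\ne0\}$. Saturated means $n\sigma\in S(W)$ for some integer $n\ge1$ implies $\sigma\in S(W)$. *)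

theory Defs
  imports "HOL-Computational_Algebra.Polynomial"
begin

definition alg_closed_field :: "'k::field itself \<Rightarrow> bool" where
  "alg_closed_field _ \<longleftrightarrow> (\<forall>p :: 'k poly. degree p > 0 \<longrightarrow> (\<exists>x. poly p x = 0))"

definition quiver :: "'v set \<Rightarrow> 'a set \<Rightarrow> ('a \<Rightarrow> 'v) \<Rightarrow> ('a \<Rightarrow> 'v) \<Rightarrow> bool" where
  "quiver Q0 Q1 t h \<longleftrightarrow> finite Q0 \<and> finite Q1 \<and> (\<forall>a\<in>Q1. t a \<in> Q0 \<and> h a \<in> Q0)"

definition no_oriented_cycles :: "'a set \<Rightarrow> ('a \<Rightarrow> 'v) \<Rightarrow> ('a \<Rightarrow> 'v) \<Rightarrow> bool" where
  "no_oriented_cycles Q1 t h \<longleftrightarrow> acyclic {(t a, h a) | a. a \<in> Q1}"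

text \<open>Rep(Q,1) = k^{Q1}, realised as functions vanishing outside Q1.\<close>
definition rep1 :: "'a set \<Rightarrow> ('a \<Rightarrow> 'k::field) set" where
  "rep1 Q1 = {W. \<forall>a. a \<notin> Q1 \<longrightarrow> W a = 0}"

text \<open>GL(1) = (k^*)^{Q0}, realised as functions nonzero on Q0 and 1 outside.\<close>
definition torus :: "'v set \<Rightarrow> ('v \<Rightarrow> 'k::field) set" where
  "torus Q0 = {g. (\<forall>x\<in>Q0. g x \<noteq> 0) \<and> (\<forall>x. x \<notin> Q0 \<longrightarrow> g x = 1)}"

definition torus_act :: "'a set \<Rightarrow> ('a \<Rightarrow> 'v) \<Rightarrow> ('a \<Rightarrow> 'v) \<Rightarrow> ('v \<Rightarrow> 'k::field) \<Rightarrow> ('a \<Rightarrow> 'k) \<Rightarrow> ('a \<Rightarrow> 'k)" where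
  "torus_act Q1 t h g W = (\<lambda>a. if a \<in> Q1 then g (h a) * W a * inverse (g (t a)) else 0)"

definition torus_inv :: "'v set \<Rightarrow> ('v \<Rightarrow> 'k::field) \<Rightarrow> ('v \<Rightarrow> 'k)" where
  "torus_inv Q0 g = (\<lambda>x. if x \<in> Q0 then inverse (g x) else 1)"

definition character :: "'v set \<Rightarrow> ('v \<Rightarrow> int) \<Rightarrow> ('v \<Rightarrow> 'k::field) \<Rightarrow> 'k" where
  "character Q0 \<sigma> g = (\<Prod>x\<in>Q0. g x powi \<sigma> x)"

definition poly_fun :: "'a set \<Rightarrow> (('a \<Rightarrow> 'k::field) \<Rightarrow> 'k) set" where
  "poly_fun Q1 = {f. \<exists>M c. finite M \<and> (\<forall>m\<in>M. \<forall>a. a \<notin> Q1 \<longrightarrow> m a = (0::nat)) \<and>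
       (\<forall>W\<in>rep1 Q1. f W = (\<Sum>m\<in>M. c m * (\<Prod>a\<in>Q1. W a ^ m a)))}"

text \<open>SI(Q,1)_sigma: polynomial functions with g.f = sigma(g) f, where (g.f)(W) = f(g^{-1}.W).\<close>
definition SI_weight :: "'v set \<Rightarrow> 'a set \<Rightarrow> ('a \<Rightarrow> 'v) \<Rightarrow> ('a \<Rightarrow> 'v) \<Rightarrow> ('v \<Rightarrow> int) \<Rightarrow> (('a \<Rightarrow> 'k::field) \<Rightarrow> 'k) set" where
  "SI_weight Q0 Q1 t h \<sigma> = {f \<in> poly_fun Q1. \<forall>g\<in>torus Q0. \<forall>W\<in>rep1 Q1.
       f (torus_act Q1 t h (torus_inv Q0 g) W) = character Q0 \<sigma> g * f W}"

text \<open>Weights sigma in Z^{Q0}, realised as integer functions vanishing outside Q0.\<close>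
definition weights :: "'v set \<Rightarrow> ('v \<Rightarrow> int) set" where
  "weights Q0 = {\<sigma>. \<forall>x. x \<notin> Q0 \<longrightarrow> \<sigma> x = 0}"

definition orbit_semigroup :: "'v set \<Rightarrow> 'a set \<Rightarrow> ('a \<Rightarrow> 'v) \<Rightarrow> ('a \<Rightarrow> 'v) \<Rightarrow> ('a \<Rightarrow> 'k::field) \<Rightarrow> ('v \<Rightarrow> int) set" where
  "orbit_semigroup Q0 Q1 t h W = {\<sigma> \<in> weights Q0. \<exists>f \<in> SI_weight Q0 Q1 t h \<sigma>. f W \<noteq> 0}"

definition saturated :: "('v \<Rightarrow> int) set \<Rightarrow> bool" where
  "saturated S \<longleftrightarrow> (\<forall>\<sigma> (n::nat). n \<ge> 1 \<longrightarrow> (\<lambda>x. int n * \<sigma> x) \<in> S \<longrightarrow> \<sigma> \<in> S)"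

end

theory Submission
  imports Defs
begin

(*
  The coordinate functions of Rep(Q,1) are eigenvectors of the torus, so every monomial
  W^m = prod_a W(a)^m(a) is a semi-invariant; its weight is the net outflow of m regarded
  as a nonnegative integral flow on the arrows (outflow minus inflow at each vertex).
  Since distinct characters of the torus are linearly independent over an infinite field,
  a semi-invariant of weight sigma not vanishing at W contains a monomial of weight sigma
  not vanishing at W.  Hence sigma lies in S(W) iff sigma is the net outflow of a flow
  supported on the arrows where W is nonzero.  Gale's theorem describes these net outflows
  by linear inequalities: total sum zero, and nonpositive sum over every successor-closed
  vertex set.  These conditions are invariant under scaling by positive integers, which
  gives saturation.
*)

subsection \<open>Linear independence of characters\<close>

lemma laurent_identity_coeff:
  fixes a :: "'i \<Rightarrow> 'k::field_char_0" and e :: "'i \<Rightarrow> int"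
  assumes fin: "finite I"
    and eq: "\<And>s. s \<noteq> 0 \<Longrightarrow> (\<Sum>i\<in>I. a i * s powi e i) = b * s powi e0"
  shows "(\<Sum>i\<in>{i\<in>I. e i = e0}. a i) = b"
proof -
  txt \<open>Shift all exponents by N to obtain an ordinary polynomial with infinitely many roots.\<close>
  define N where "N = (\<Sum>i\<in>I. \<bar>e i\<bar>) + \<bar>e0\<bar>"
  have Ne: "0 \<le> e i + N" if "i \<in> I" for i
  proof -
    have "\<bar>e i\<bar> \<le> (\<Sum>i\<in>I. \<bar>e i\<bar>)" using that fin by (intro member_le_sum) auto
    then show ?thesis unfolding N_def by linarith
  qed
  have N0: "0 \<le> e0 + N" unfolding N_def using sum_nonneg[of I "\<lambda>i. \<bar>e i\<bar>"] by linarith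
  define p where "p = (\<Sum>i\<in>I. monom (a i) (nat (e i + N))) - monom b (nat (e0 + N))"
  have roots: "poly p s = 0" if s: "s \<noteq> 0" for s
  proof -
    have pw: "s ^ nat (f + N) = s powi f * s powi N" if "0 \<le> f + N" for f
      using that s by (simp add: power_int_nonneg_exp[symmetric] power_int_add)
    have "poly p s = (\<Sum>i\<in>I. a i * s ^ nat (e i + N)) - b * s ^ nat (e0 + N)"
      by (simp add: p_def poly_sum poly_monom)
    also have "\<dots> = ((\<Sum>i\<in>I. a i * s powi e i) - b * s powi e0) * s powi N"
      using Ne N0 by (simp add: pw sum_distrib_right mult.assoc left_diff_distrib)
    also have "\<dots> = 0" using eq[OF s] by simp
    finally show ?thesis .
  qed
  have "p = 0"
  proof (rule ccontr)
    assume "p \<noteq> 0"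
    then have "finite {x. poly p x = 0}" by (rule poly_roots_finite)
    moreover have "UNIV - {0} \<subseteq> {x. poly p x = 0}" using roots by auto
    ultimately have "finite (UNIV - {0::'k})" by (rule finite_subset[rotated])
    then show False using infinite_UNIV_char_0[where 'a='k] by simp
  qed
  then have "coeff p (nat (e0 + N)) = 0" by simp
  then have "(\<Sum>i\<in>I. if nat (e i + N) = nat (e0 + N) then a i else 0) = b"
    by (simp add: p_def coeff_sum coeff_monom)
  moreover have "nat (e i + N) = nat (e0 + N) \<longleftrightarrow> e i = e0" if "i \<in> I" for i
    using Ne[OF that] N0 by (auto simp: nat_eq_iff2)
  ultimately show ?thesis by (simp add: sum.inter_filter[OF fin] cong: sum.cong)
qed

lemma character_fun_upd:
  assumes "finite Q0" "x \<in> Q0"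
  shows "character Q0 d (g(x:=s)) = s powi d x * (\<Prod>y\<in>Q0-{x}. g y powi d y)"
proof -
  have "(\<Prod>y\<in>Q0-{x}. (g(x:=s)) y powi d y) = (\<Prod>y\<in>Q0-{x}. g y powi d y)"
    by (intro prod.cong) auto
  then show ?thesis unfolding character_def using assms by (simp add: prod.remove)
qed

text \<open>Proved by separating the variables one vertex at a time.\<close>
lemma character_coefficients:
  fixes C :: "'m \<Rightarrow> 'k::field_char_0" and D :: "'m \<Rightarrow> 'v \<Rightarrow> int"
  assumes finM: "finite M" and finV: "finite Q0"
    and eq: "\<And>g. g \<in> torus Q0 \<Longrightarrow> (\<Sum>m\<in>M. C m * character Q0 (D m) g) = F * character Q0 \<tau> g"
  shows "(\<Sum>m\<in>{m\<in>M. \<forall>x\<in>Q0. D m x = \<tau> x}. C m) = F"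
proof -
  txt \<open>Invariant: after separating the vertices in S, only the terms agreeing with \<open>\<tau>\<close> on S remain.\<close>
  have separated: "\<forall>g\<in>torus Q0.
      (\<Sum>m\<in>{m\<in>M. \<forall>x\<in>S. D m x = \<tau> x}. C m * character Q0 (D m) g) = F * character Q0 \<tau> g"
    if "S \<subseteq> Q0" for S
    using finite_subset[OF that finV] that
  proof (induction S rule: finite_induct)
    case empty
    then show ?case using eq by simp
  next
    case (insert x S)
    have xQ: "x \<in> Q0" and SQ: "S \<subseteq> Q0" using insert.prems by auto
    show ?case
    proof
      fix g :: "'v \<Rightarrow> 'k" assume g: "g \<in> torus Q0"
      define MS where "MS = {m\<in>M. \<forall>x\<in>S. D m x = \<tau> x}"
      define R where "R m = (\<Prod>y\<in>Q0-{x}. g y powi D m y)" for m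
      define Rt where "Rt = (\<Prod>y\<in>Q0-{x}. g y powi \<tau> y)"
      have split: "character Q0 d g = g x powi d x * (\<Prod>y\<in>Q0-{x}. g y powi d y)" for d
        using character_fun_upd[OF finV xQ, of d g "g x"] by simp
      txt \<open>Varying the coordinate at x gives a Laurent identity in one variable.\<close>
      have "(\<Sum>m\<in>MS. (C m * R m) * s powi D m x) = (F * Rt) * s powi \<tau> x" if s: "s \<noteq> 0" for s
      proof -
        have "g(x:=s) \<in> torus Q0" using g s xQ by (auto simp: torus_def)
        then have "(\<Sum>m\<in>MS. C m * character Q0 (D m) (g(x:=s))) = F * character Q0 \<tau> (g(x:=s))"
          using insert.IH[OF SQ] unfolding MS_def by blast
        then show ?thesis
          by (simp add: character_fun_upd[OF finV xQ] R_def Rt_def mult.commute mult.left_commute)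
      qed
      then have coeff: "(\<Sum>m\<in>{m\<in>MS. D m x = \<tau> x}. C m * R m) = F * Rt"
        using finM unfolding MS_def by (intro laurent_identity_coeff) auto
      have "(\<Sum>m\<in>{m\<in>MS. D m x = \<tau> x}. C m * (g x powi D m x * R m))
          = (\<Sum>m\<in>{m\<in>MS. D m x = \<tau> x}. C m * R m) * g x powi \<tau> x"
        by (subst sum_distrib_right) (auto intro!: sum.cong simp: mult_ac)
      also have "\<dots> = F * (g x powi \<tau> x * Rt)" using coeff by (simp add: mult_ac)
      finally show "(\<Sum>m\<in>{m\<in>M. \<forall>y\<in>insert x S. D m y = \<tau> y}. C m * character Q0 (D m) g)
          = F * character Q0 \<tau> g"
        unfolding split R_def[symmetric] Rt_def[symmetric]
        by (simp add: MS_def conj_commute conj_left_commute)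
    qed
  qed
  have "(\<lambda>_. 1) \<in> torus Q0" by (simp add: torus_def)
  moreover have "character Q0 d (\<lambda>_. 1::'k) = 1" for d by (simp add: character_def)
  ultimately show ?thesis using separated[OF order_refl] by auto
qed

subsection \<open>Net outflows of integral flows and Gale's theorem\<close>

definition net_outflow :: "'a set \<Rightarrow> ('a \<Rightarrow> 'v) \<Rightarrow> ('a \<Rightarrow> 'v) \<Rightarrow> ('a \<Rightarrow> nat) \<Rightarrow> 'v \<Rightarrow> int" where
  "net_outflow A t h m x = (\<Sum>a\<in>{a\<in>A. t a = x}. int (m a)) - (\<Sum>a\<in>{a\<in>A. h a = x}. int (m a))"

definition arrow_rel :: "'a set \<Rightarrow> ('a \<Rightarrow> 'v) \<Rightarrow> ('a \<Rightarrow> 'v) \<Rightarrow> ('v \<times> 'v) set" where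
  "arrow_rel A t h = {(t a, h a) | a. a \<in> A}"

definition successor_closed :: "'a set \<Rightarrow> ('a \<Rightarrow> 'v) \<Rightarrow> ('a \<Rightarrow> 'v) \<Rightarrow> 'v set \<Rightarrow> bool" where
  "successor_closed A t h X \<longleftrightarrow> (\<forall>a\<in>A. t a \<in> X \<longrightarrow> h a \<in> X)"

definition gale_condition :: "'a set \<Rightarrow> ('a \<Rightarrow> 'v) \<Rightarrow> ('a \<Rightarrow> 'v) \<Rightarrow> 'v set \<Rightarrow> ('v \<Rightarrow> int) \<Rightarrow> bool" where
  "gale_condition A t h V b \<longleftrightarrow>
     sum b V = 0 \<and> (\<forall>X. X \<subseteq> V \<longrightarrow> successor_closed A t h X \<longrightarrow> sum b X \<le> 0)"

definition tight_set :: "'a set \<Rightarrow> ('a \<Rightarrow> 'v) \<Rightarrow> ('a \<Rightarrow> 'v) \<Rightarrow> 'v set \<Rightarrow> ('v \<Rightarrow> int) \<Rightarrow> 'v set \<Rightarrow> bool" where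
  "tight_set A t h V b X \<longleftrightarrow> X \<subseteq> V \<and> successor_closed A t h X \<and> sum b X = 0"

lemma net_outflow_add: "net_outflow A t h (\<lambda>a. m a + p a) x = net_outflow A t h m x + net_outflow A t h p x"
  unfolding net_outflow_def by (simp add: sum.distrib)

lemma net_outflow_cong: "(\<And>a. a \<in> A \<Longrightarrow> m a = p a) \<Longrightarrow> net_outflow A t h m x = net_outflow A t h p x"
  unfolding net_outflow_def by (intro arg_cong2[where f="(-)"] sum.cong) auto

lemma net_outflow_restrict:
  assumes "finite B" "A \<subseteq> B" "\<forall>a\<in>B - A. m a = 0"
  shows "net_outflow B t h m x = net_outflow A t h m x"
proof -
  have no_flow_outside: "\<forall>i\<in>{a\<in>B. P a} - {a\<in>A. P a}. int (m i) = 0" for P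
  proof
    fix i assume "i \<in> {a\<in>B. P a} - {a\<in>A. P a}"
    then have "i \<in> B - A" by blast
    then show "int (m i) = 0" using assms(3) by simp
  qed
  have "(\<Sum>a\<in>{a\<in>B. P a}. int (m a)) = (\<Sum>a\<in>{a\<in>A. P a}. int (m a))" for P
    using assms(1,2) by (intro sum.mono_neutral_right[OF _ _ no_flow_outside]) auto
  then show ?thesis unfolding net_outflow_def by simp
qed

lemma net_outflow_arrow:
  assumes "finite A" "a0 \<in> A"
  shows "net_outflow A t h (\<lambda>a. if a = a0 then 1 else 0) x
           = (if t a0 = x then 1 else 0) - (if h a0 = x then 1 else 0)"
proof -
  have "(\<Sum>a\<in>{a\<in>A. P a}. int (if a = a0 then 1 else 0)) = (if P a0 then 1 else 0)" for P
  proof -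
    have "(\<Sum>a\<in>{a\<in>A. P a}. int (if a = a0 then 1 else 0)) = (\<Sum>a\<in>{a\<in>A. P a}. if a = a0 then 1 else 0)"
      by (intro sum.cong) auto
    then show ?thesis using assms by (simp add: sum.delta)
  qed
  then show ?thesis unfolding net_outflow_def by simp
qed

lemma net_outflow_path:
  assumes fin: "finite A" and "(x, y) \<in> (arrow_rel A t h)\<^sup>*"
  shows "\<exists>p. \<forall>w. net_outflow A t h p w = (if w = x then 1 else 0) - (if w = y then 1 else 0)"
  using assms(2)
proof (induction rule: rtrancl_induct)
  case base
  show ?case by (rule exI[of _ "\<lambda>_. 0"]) (simp add: net_outflow_def)
next
  case (step y z)
  then obtain a0 where a0: "a0 \<in> A" "t a0 = y" "h a0 = z" by (auto simp: arrow_rel_def)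
  from step.IH obtain p
    where p: "\<forall>w. net_outflow A t h p w = (if w = x then 1 else 0) - (if w = y then 1 else 0)" by blast
  show ?case
    by (rule exI[of _ "\<lambda>a. p a + (if a = a0 then 1 else 0)"])
       (simp add: net_outflow_add net_outflow_arrow[OF fin a0(1)] p a0)
qed

lemma sum_net_outflow:
  assumes "finite A" "finite X"
  shows "(\<Sum>x\<in>X. net_outflow A t h m x)
           = (\<Sum>a\<in>{a\<in>A. t a \<in> X}. int (m a)) - (\<Sum>a\<in>{a\<in>A. h a \<in> X}. int (m a))"
proof -
  have fibres: "(\<Sum>x\<in>X. \<Sum>a\<in>{a\<in>A. s a = x}. int (m a)) = (\<Sum>a\<in>{a\<in>A. s a \<in> X}. int (m a))"
    for s
  proof -
    have "(\<Sum>x\<in>X. \<Sum>a\<in>{a\<in>{a\<in>A. s a \<in> X}. s a = x}. int (m a)) = (\<Sum>a\<in>{a\<in>A. s a \<in> X}. int (m a))"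
      using assms by (intro sum.group) auto
    moreover have "{a\<in>{a\<in>A. s a \<in> X}. s a = x} = {a\<in>A. s a = x}" if "x \<in> X" for x
      using that by auto
    ultimately show ?thesis by simp
  qed
  show ?thesis unfolding net_outflow_def by (simp add: sum_subtractf fibres)
qed

lemma gale_condition_net_outflow:
  assumes "finite A" "finite V" "\<forall>a\<in>A. t a \<in> V \<and> h a \<in> V"
  shows "gale_condition A t h V (net_outflow A t h m)"
proof -
  have "{a\<in>A. t a \<in> V} = A" "{a\<in>A. h a \<in> V} = A" using assms(3) by auto
  then have "sum (net_outflow A t h m) V = 0" using sum_net_outflow[OF assms(1,2)] by simp
  moreover have "sum (net_outflow A t h m) X \<le> 0" if "X \<subseteq> V" "successor_closed A t h X" for X
  proof -
    have "{a\<in>A. t a \<in> X} \<subseteq> {a\<in>A. h a \<in> X}" using that(2) by (auto simp: successor_closed_def)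
    then have "(\<Sum>a\<in>{a\<in>A. t a \<in> X}. int (m a)) \<le> (\<Sum>a\<in>{a\<in>A. h a \<in> X}. int (m a))"
      using assms(1) by (intro sum_mono2) auto
    then show ?thesis using sum_net_outflow[OF assms(1) finite_subset[OF that(1) assms(2)]] by simp
  qed
  ultimately show ?thesis by (simp add: gale_condition_def)
qed

lemma gale_condition_scale:
  assumes "n \<ge> 1" "gale_condition A t h V (\<lambda>x. int n * b x)"
  shows "gale_condition A t h V b"
  using assms by (simp add: gale_condition_def sum_distrib_left[symmetric] mult_le_0_iff)

text \<open>Under Gale's condition tight sets are closed under union, by the modular identity for sums.\<close>
lemma tight_set_union:
  assumes gale: "gale_condition A t h V b" and fin: "finite V"
    and X: "tight_set A t h V b X" and Y: "tight_set A t h V b Y"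
  shows "tight_set A t h V b (X \<union> Y)"
proof -
  have sub: "X \<union> Y \<subseteq> V" "X \<inter> Y \<subseteq> V" and fXY: "finite X" "finite Y"
    using X Y rev_finite_subset[OF fin] by (auto simp: tight_set_def)
  have closed: "successor_closed A t h (X \<union> Y)" "successor_closed A t h (X \<inter> Y)"
    using X Y by (auto simp: tight_set_def successor_closed_def)
  have "sum b (X \<union> Y) \<le> 0" "sum b (X \<inter> Y) \<le> 0"
    using gale sub closed by (auto simp: gale_condition_def)
  moreover have "sum b (X \<union> Y) + sum b (X \<inter> Y) = sum b X + sum b Y"
    using fXY by (rule sum.union_inter)
  ultimately have "sum b (X \<union> Y) = 0" using X Y by (simp add: tight_set_def)
  then show ?thesis using sub closed by (simp add: tight_set_def)
qed

lemma largest_tight_set_avoiding: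
  assumes gale: "gale_condition A t h V b" and fin: "finite V"
  obtains T where "tight_set A t h V b T" "x \<notin> T"
    "\<And>Y. tight_set A t h V b Y \<Longrightarrow> x \<notin> Y \<Longrightarrow> Y \<subseteq> T"
proof -
  define F where "F = {X. tight_set A t h V b X \<and> x \<notin> X}"
  have "F \<subseteq> Pow V" by (auto simp: F_def tight_set_def)
  then have "finite F" using fin by (meson finite_Pow_iff finite_subset)
  moreover have "{} \<in> F" by (simp add: F_def tight_set_def successor_closed_def)
  ultimately obtain T where T: "T \<in> F" and maximal: "\<forall>Y\<in>F. T \<subseteq> Y \<longrightarrow> T = Y"
    using finite_has_maximal[of F] by blast
  have "Y \<subseteq> T" if "tight_set A t h V b Y" "x \<notin> Y" for Y
  proof -
    have "T \<union> Y \<in> F" using T that tight_set_union[OF gale fin] by (auto simp: F_def)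
    then show ?thesis using maximal by blast
  qed
  with T show ?thesis using that by (auto simp: F_def)
qed

lemma reachable_successor_closed:
  assumes "x \<in> V" "\<forall>a\<in>A. t a \<in> V \<and> h a \<in> V"
  shows "(arrow_rel A t h)\<^sup>* `` {x} \<subseteq> V" "successor_closed A t h ((arrow_rel A t h)\<^sup>* `` {x})"
proof -
  show "(arrow_rel A t h)\<^sup>* `` {x} \<subseteq> V"
  proof
    fix y assume "y \<in> (arrow_rel A t h)\<^sup>* `` {x}"
    then have "(x, y) \<in> (arrow_rel A t h)\<^sup>*" by simp
    then show "y \<in> V"
      by (induction rule: rtrancl_induct) (use assms in \<open>auto simp: arrow_rel_def\<close>)
  qed
  show "successor_closed A t h ((arrow_rel A t h)\<^sup>* `` {x})"
    unfolding successor_closed_def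
  proof (intro ballI impI)
    fix a assume "a \<in> A" "t a \<in> (arrow_rel A t h)\<^sup>* `` {x}"
    moreover have "(t a, h a) \<in> arrow_rel A t h" using \<open>a \<in> A\<close> by (auto simp: arrow_rel_def)
    ultimately show "h a \<in> (arrow_rel A t h)\<^sup>* `` {x}" by (auto intro: rtrancl_into_rtrancl)
  qed
qed

text \<open>The vertex y is taken outside the largest tight set avoiding x.\<close>
lemma gale_step:
  assumes gale: "gale_condition A t h V b" and fin: "finite V"
    and ends: "\<forall>a\<in>A. t a \<in> V \<and> h a \<in> V" and x: "x \<in> V" "b x > 0"
  obtains y where "y \<in> V" "(x, y) \<in> (arrow_rel A t h)\<^sup>*" "b y < 0"
    "gale_condition A t h V (\<lambda>z. b z - (if z = x then 1 else 0) + (if z = y then 1 else 0))"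
proof -
  define R where "R = (arrow_rel A t h)\<^sup>* `` {x}"
  have RV: "R \<subseteq> V" and Rclosed: "successor_closed A t h R"
    using reachable_successor_closed[OF x(1) ends] by (simp_all add: R_def)
  obtain T where T: "tight_set A t h V b T" "x \<notin> T"
    and largest: "\<And>Y. tight_set A t h V b Y \<Longrightarrow> x \<notin> Y \<Longrightarrow> Y \<subseteq> T"
    using largest_tight_set_avoiding[OF gale fin] by metis
  have finRT: "finite R" "finite T" using RV T(1) rev_finite_subset[OF fin] by (auto simp: tight_set_def)
  txt \<open>Gale's condition for the closed set R \<union> T forces a negative demand in R - T.\<close>
  have "R \<union> T \<subseteq> V" using RV T(1) by (auto simp: tight_set_def)
  moreover have "successor_closed A t h (R \<union> T)"
    using Rclosed T(1) by (auto simp: tight_set_def successor_closed_def)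
  ultimately have "sum b (R \<union> T) \<le> 0" using gale by (simp add: gale_condition_def)
  moreover have "sum b (R \<union> T) = sum b T + sum b (R - T)"
    using finRT sum.union_disjoint[of T "R - T" b] by (simp add: Un_commute)
  ultimately have sumRT: "sum b (R - T) \<le> 0" using T(1) by (simp add: tight_set_def)
  have "\<exists>y\<in>R - T. b y < 0"
  proof (rule ccontr)
    assume "\<not> ?thesis"
    then have "\<forall>y\<in>R - T - {x}. 0 \<le> b y" by (auto simp: not_less)
    moreover have "x \<in> R - T" using T(2) by (simp add: R_def)
    ultimately have "b x \<le> sum b (R - T)" using finRT by (intro member_le_sum) auto
    then show False using sumRT x(2) by simp
  qed
  then obtain y where y: "y \<in> R" "y \<notin> T" "b y < 0" by blast
  define b' where "b' = (\<lambda>z. b z - (if z = x then 1 else 0) + (if z = y then 1 else 0))"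
  have sum_b': "sum b' X = sum b X - (if x \<in> X then 1 else 0) + (if y \<in> X then 1 else 0)"
    if "finite X" for X
    unfolding b'_def using that by (simp add: sum.distrib sum_subtractf)
  txt \<open>A closed set containing y but not x cannot be tight, so it still satisfies the condition.\<close>
  have "sum b' X \<le> 0" if X: "X \<subseteq> V" "successor_closed A t h X" for X
  proof -
    have "sum b X \<le> 0" using gale X by (simp add: gale_condition_def)
    moreover have "sum b X \<noteq> 0" if "y \<in> X" "x \<notin> X"
      using largest[of X] X that y(2) by (auto simp: tight_set_def)
    ultimately show ?thesis using sum_b'[OF finite_subset[OF X(1) fin]] by auto
  qed
  moreover have "sum b' V = 0"
    using sum_b'[OF fin] x(1) RV y(1) gale by (auto simp: gale_condition_def)
  ultimately have "gale_condition A t h V b'" by (simp add: gale_condition_def)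
  then show ?thesis using that[of y] y RV by (auto simp: R_def b'_def)
qed

text \<open>Induction on the total positive demand, using the
  augmenting step and a unit flow along the connecting path.\<close>
lemma gale_sufficient:
  assumes finA: "finite A" and fin: "finite V" and ends: "\<forall>a\<in>A. t a \<in> V \<and> h a \<in> V"
  shows "gale_condition A t h V b \<Longrightarrow> \<exists>m. \<forall>x\<in>V. net_outflow A t h m x = b x"
proof (induction "\<Sum>x\<in>V. nat (b x)" arbitrary: b rule: less_induct)
  case less
  show ?case
  proof (cases "\<exists>x\<in>V. b x > 0")
    case False
    txt \<open>No positive demand and total sum zero: the demand vanishes and the zero flow works.\<close>
    then have "\<forall>x\<in>V. 0 \<le> - b x" by (simp add: not_less)
    moreover have "(\<Sum>x\<in>V. - b x) = 0" using less.prems by (simp add: gale_condition_def sum_negf)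
    ultimately have "\<forall>x\<in>V. b x = 0" using sum_nonneg_eq_0_iff[OF fin, of "\<lambda>x. - b x"] by simp
    then show ?thesis by (intro exI[of _ "\<lambda>_. 0"]) (simp add: net_outflow_def)
  next
    case True
    then obtain x where x: "x \<in> V" "b x > 0" by blast
    obtain y where y: "y \<in> V" "(x, y) \<in> (arrow_rel A t h)\<^sup>*" "b y < 0"
      and gale': "gale_condition A t h V (\<lambda>z. b z - (if z = x then 1 else 0) + (if z = y then 1 else 0))"
      by (rule gale_step[OF less.prems fin ends x])
    define b' where "b' = (\<lambda>z. b z - (if z = x then 1 else 0) + (if z = y then 1 else 0))"
    have decrease: "(\<Sum>z\<in>V. nat (b' z)) < (\<Sum>z\<in>V. nat (b z))"
    proof (rule sum_strict_mono_ex1[OF fin])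
      show "\<forall>z\<in>V. nat (b' z) \<le> nat (b z)" using x(2) y(3) by (auto simp: b'_def)
      show "\<exists>z\<in>V. nat (b' z) < nat (b z)" using x y(3) by (intro bexI[of _ x]) (auto simp: b'_def)
    qed
    have gale_b': "gale_condition A t h V b'" unfolding b'_def by (rule gale')
    obtain m where m: "\<forall>z\<in>V. net_outflow A t h m z = b' z"
      using less.hyps[OF decrease gale_b'] by blast
    obtain p where p: "\<forall>w. net_outflow A t h p w = (if w = x then 1 else 0) - (if w = y then 1 else 0)"
      using net_outflow_path[OF finA y(2)] by blast
    show ?thesis
      by (rule exI[of _ "\<lambda>a. m a + p a"]) (simp add: net_outflow_add m p b'_def)
  qed
qed

theorem gale_theorem:
  assumes "finite A" "finite V" "\<forall>a\<in>A. t a \<in> V \<and> h a \<in> V"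
  shows "(\<exists>m. \<forall>x\<in>V. net_outflow A t h m x = b x) \<longleftrightarrow> gale_condition A t h V b"
proof
  assume "\<exists>m. \<forall>x\<in>V. net_outflow A t h m x = b x"
  then obtain m where m: "\<forall>x\<in>V. net_outflow A t h m x = b x" by blast
  have "gale_condition A t h V (net_outflow A t h m)" using assms by (rule gale_condition_net_outflow)
  moreover have "sum (net_outflow A t h m) X = sum b X" if "X \<subseteq> V" for X
    using m that by (intro sum.cong) auto
  ultimately show "gale_condition A t h V b" by (simp add: gale_condition_def)
next
  assume "gale_condition A t h V b"
  then show "\<exists>m. \<forall>x\<in>V. net_outflow A t h m x = b x" by (rule gale_sufficient[OF assms])
qed

subsection \<open>Monomial semi-invariants and the orbit semigroup\<close>

definition monomial :: "'a set \<Rightarrow> ('a \<Rightarrow> nat) \<Rightarrow> ('a \<Rightarrow> 'k::field) \<Rightarrow> 'k" where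
  "monomial Q1 m W = (\<Prod>a\<in>Q1. W a ^ m a)"

definition arrow_support :: "'a set \<Rightarrow> ('a \<Rightarrow> 'k::zero) \<Rightarrow> 'a set" where
  "arrow_support Q1 W = {a\<in>Q1. W a \<noteq> 0}"

lemma torus_act_inv_arrow:
  assumes q: "quiver Q0 Q1 t h" and g: "g \<in> torus Q0" and a: "a \<in> Q1"
  shows "torus_act Q1 t h (torus_inv Q0 g) W a = W a * (g (t a) * inverse (g (h a)))"
proof -
  have "t a \<in> Q0" "h a \<in> Q0" using q a by (auto simp: quiver_def)
  then show ?thesis using a by (simp add: torus_act_def torus_inv_def mult_ac)
qed

lemma prod_power_fibres:
  assumes "finite Q1" "finite Q0" "s ` Q1 \<subseteq> Q0"
  shows "(\<Prod>a\<in>Q1. c (s a) ^ m a) = (\<Prod>x\<in>Q0. (c x :: 'k::comm_monoid_mult) ^ (\<Sum>a\<in>{a\<in>Q1. s a = x}. m a))"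
proof -
  have "(\<Prod>a\<in>Q1. c (s a) ^ m a) = (\<Prod>x\<in>Q0. \<Prod>a\<in>{a\<in>Q1. s a = x}. c (s a) ^ m a)"
    using assms by (intro prod.group[symmetric]) auto
  also have "\<dots> = (\<Prod>x\<in>Q0. \<Prod>a\<in>{a\<in>Q1. s a = x}. c x ^ m a)"
    by (intro prod.cong refl) auto
  also have "\<dots> = (\<Prod>x\<in>Q0. c x ^ (\<Sum>a\<in>{a\<in>Q1. s a = x}. m a))"
    by (simp add: power_sum)
  finally show ?thesis .
qed

lemma rescaling_character:
  fixes g :: "'v \<Rightarrow> 'k::field"
  assumes q: "quiver Q0 Q1 t h" and g: "g \<in> torus Q0"
  shows "(\<Prod>a\<in>Q1. (g (t a) * inverse (g (h a))) ^ m a) = character Q0 (net_outflow Q1 t h m) g"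
proof -
  have fin: "finite Q1" "finite Q0" "t ` Q1 \<subseteq> Q0" "h ` Q1 \<subseteq> Q0" using q by (auto simp: quiver_def)
  define out where "out x = (\<Sum>a\<in>{a\<in>Q1. t a = x}. m a)" for x
  define inc where "inc x = (\<Sum>a\<in>{a\<in>Q1. h a = x}. m a)" for x
  have "(\<Prod>a\<in>Q1. (g (t a) * inverse (g (h a))) ^ m a)
      = (\<Prod>a\<in>Q1. g (t a) ^ m a) * (\<Prod>a\<in>Q1. (inverse \<circ> g) (h a) ^ m a)"
    by (simp add: power_mult_distrib prod.distrib)
  also have "\<dots> = (\<Prod>x\<in>Q0. g x ^ out x * inverse (g x ^ inc x))"
    using prod_power_fibres[OF fin(1,2,3), of g m] prod_power_fibres[OF fin(1,2,4), of "inverse \<circ> g" m]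
    by (simp add: out_def inc_def prod.distrib power_inverse)
  also have "\<dots> = (\<Prod>x\<in>Q0. g x powi net_outflow Q1 t h m x)"
  proof (intro prod.cong refl)
    fix x assume "x \<in> Q0"
    then have gx: "g x \<noteq> 0" using g by (simp add: torus_def)
    have "net_outflow Q1 t h m x = int (out x) + - int (inc x)"
      by (simp add: net_outflow_def of_nat_sum out_def inc_def)
    then show "g x ^ out x * inverse (g x ^ inc x) = g x powi net_outflow Q1 t h m x"
      by (simp only: power_int_add[OF disjI1[OF gx]] power_int_minus power_int_of_nat)
  qed
  finally show ?thesis by (simp add: character_def)
qed

lemma monomial_torus_act:
  assumes q: "quiver Q0 Q1 t h" and g: "g \<in> torus Q0"
  shows "monomial Q1 m (torus_act Q1 t h (torus_inv Q0 g) W)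
           = character Q0 (net_outflow Q1 t h m) g * monomial Q1 m W"
proof -
  have "monomial Q1 m (torus_act Q1 t h (torus_inv Q0 g) W)
      = (\<Prod>a\<in>Q1. W a ^ m a * (g (t a) * inverse (g (h a))) ^ m a)"
    unfolding monomial_def using torus_act_inv_arrow[OF q g]
    by (intro prod.cong refl) (simp add: power_mult_distrib)
  also have "\<dots> = monomial Q1 m W * (\<Prod>a\<in>Q1. (g (t a) * inverse (g (h a))) ^ m a)"
    by (simp add: prod.distrib monomial_def)
  finally show ?thesis using rescaling_character[OF q g] by (simp add: mult.commute)
qed

lemma monomial_semi_invariant:
  fixes Q0 :: "'v set" and Q1 :: "'a set" and m :: "'a \<Rightarrow> nat"
  assumes q: "quiver Q0 Q1 t h" and m: "\<forall>a. a \<notin> Q1 \<longrightarrow> m a = 0"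
    and weight: "\<forall>x\<in>Q0. net_outflow Q1 t h m x = \<sigma> x"
  shows "(monomial Q1 m :: ('a \<Rightarrow> 'k::field) \<Rightarrow> 'k) \<in> SI_weight Q0 Q1 t h \<sigma>"
proof -
  have "monomial Q1 m \<in> poly_fun Q1"
    unfolding poly_fun_def using m by (intro CollectI exI[of _ "{m}"] exI[of _ "\<lambda>_. 1"]) (simp add: monomial_def)
  moreover have "character Q0 (net_outflow Q1 t h m) g = character Q0 \<sigma> g" for g :: "'v \<Rightarrow> 'k"
    unfolding character_def using weight by (intro prod.cong) auto
  ultimately show ?thesis by (simp add: SI_weight_def monomial_torus_act[OF q])
qed

text \<open>Conversely, by linear independence of characters, a semi-invariant of weight \<open>\<sigma>\<close> that does not
  vanish at W contains a monomial of weight \<open>\<sigma>\<close> that does not vanish at W.\<close>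
lemma semi_invariant_nonvanishing_monomial:
  fixes W :: "'a \<Rightarrow> 'k::field_char_0"
  assumes q: "quiver Q0 Q1 t h" and W: "W \<in> rep1 Q1"
    and f: "f \<in> SI_weight Q0 Q1 t h \<sigma>" and fW: "f W \<noteq> 0"
  obtains m where "\<forall>x\<in>Q0. net_outflow Q1 t h m x = \<sigma> x" "monomial Q1 m W \<noteq> 0"
proof -
  have finQ0: "finite Q0" using q by (simp add: quiver_def)
  obtain M c where finM: "finite M"
    and expand: "\<forall>W0\<in>rep1 Q1. f W0 = (\<Sum>m\<in>M. c m * monomial Q1 m W0)"
    using f unfolding SI_weight_def poly_fun_def monomial_def by blast
  define C where "C m = c m * monomial Q1 m W" for m
  have "(\<Sum>m\<in>M. C m * character Q0 (net_outflow Q1 t h m) g) = f W * character Q0 \<sigma> g"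
    if g: "g \<in> torus Q0" for g
  proof -
    have "torus_act Q1 t h (torus_inv Q0 g) W \<in> rep1 Q1" by (simp add: rep1_def torus_act_def)
    then have "f (torus_act Q1 t h (torus_inv Q0 g) W) = (\<Sum>m\<in>M. C m * character Q0 (net_outflow Q1 t h m) g)"
      using expand by (simp add: monomial_torus_act[OF q g] C_def mult_ac)
    moreover have "f (torus_act Q1 t h (torus_inv Q0 g) W) = character Q0 \<sigma> g * f W"
      using f g W by (simp add: SI_weight_def)
    ultimately show ?thesis by (simp add: mult.commute)
  qed
  then have "(\<Sum>m\<in>{m\<in>M. \<forall>x\<in>Q0. net_outflow Q1 t h m x = \<sigma> x}. C m) = f W"
    by (rule character_coefficients[OF finM finQ0])
  with fW have "(\<Sum>m\<in>{m\<in>M. \<forall>x\<in>Q0. net_outflow Q1 t h m x = \<sigma> x}. C m) \<noteq> 0" by simp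
  then obtain m where "m \<in> {m\<in>M. \<forall>x\<in>Q0. net_outflow Q1 t h m x = \<sigma> x}" "C m \<noteq> 0"
    by (rule sum.not_neutral_contains_not_neutral)
  then show ?thesis using that by (auto simp: C_def)
qed

lemma monomial_nonzero_iff:
  assumes "finite Q1"
  shows "monomial Q1 m W \<noteq> 0 \<longleftrightarrow> (\<forall>a\<in>Q1 - arrow_support Q1 W. m a = 0)"
  using assms by (auto simp: monomial_def arrow_support_def)

lemma orbit_semigroup_net_outflows:
  fixes W :: "'a \<Rightarrow> 'k::field_char_0"
  assumes q: "quiver Q0 Q1 t h" and W: "W \<in> rep1 Q1"
  shows "\<sigma> \<in> orbit_semigroup Q0 Q1 t h W \<longleftrightarrow>
           \<sigma> \<in> weights Q0 \<and> (\<exists>m. \<forall>x\<in>Q0. net_outflow (arrow_support Q1 W) t h m x = \<sigma> x)"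
    (is "_ \<longleftrightarrow> _ \<and> (\<exists>m. ?flow m)")
proof -
  have finQ1: "finite Q1" using q by (simp add: quiver_def)
  have supp: "arrow_support Q1 W \<subseteq> Q1" by (auto simp: arrow_support_def)
  have "\<exists>m. ?flow m" if S: "\<sigma> \<in> orbit_semigroup Q0 Q1 t h W"
  proof -
    obtain f where "f \<in> SI_weight Q0 Q1 t h \<sigma>" "f W \<noteq> 0"
      using S unfolding orbit_semigroup_def by blast
    then obtain m where m: "\<forall>x\<in>Q0. net_outflow Q1 t h m x = \<sigma> x" "monomial Q1 m W \<noteq> 0"
      using semi_invariant_nonvanishing_monomial[OF q W] by metis
    have "net_outflow Q1 t h m x = net_outflow (arrow_support Q1 W) t h m x" for x
      using m(2) by (intro net_outflow_restrict[OF finQ1 supp]) (simp add: monomial_nonzero_iff[OF finQ1])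
    then show ?thesis using m(1) by auto
  qed
  moreover have "\<sigma> \<in> orbit_semigroup Q0 Q1 t h W" if "\<sigma> \<in> weights Q0" "?flow m" for m
  proof -
    define m' where "m' a = (if a \<in> arrow_support Q1 W then m a else 0)" for a
    have "net_outflow Q1 t h m' x = net_outflow (arrow_support Q1 W) t h m x" for x
    proof -
      have "net_outflow Q1 t h m' x = net_outflow (arrow_support Q1 W) t h m' x"
        by (rule net_outflow_restrict[OF finQ1 supp]) (simp add: m'_def)
      also have "\<dots> = net_outflow (arrow_support Q1 W) t h m x"
        by (rule net_outflow_cong) (simp add: m'_def)
      finally show ?thesis .
    qed
    then have "monomial Q1 m' \<in> SI_weight Q0 Q1 t h \<sigma>"
      using that(2) supp by (intro monomial_semi_invariant[OF q]) (auto simp: m'_def)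
    moreover have "monomial Q1 m' W \<noteq> 0" by (simp add: monomial_nonzero_iff[OF finQ1] m'_def)
    ultimately show ?thesis using that(1) by (auto simp: orbit_semigroup_def)
  qed
  ultimately show ?thesis by (auto simp: orbit_semigroup_def)
qed

text \<open>By Gale's theorem, S(W) is cut out from the weight lattice by homogeneous linear
  inequalities, so it is saturated.\<close>
theorem proposition6p3:
  fixes Q0 :: "'v set" and Q1 :: "'a set" and t h :: "'a \<Rightarrow> 'v"
    and W :: "'a \<Rightarrow> 'k::field_char_0"
  assumes "alg_closed_field TYPE('k)"
    and "quiver Q0 Q1 t h"
    and "no_oriented_cycles Q1 t h"
    and "W \<in> rep1 Q1"
  shows "saturated (orbit_semigroup Q0 Q1 t h W)"
  unfolding saturated_def
proof (intro allI impI)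
  fix \<sigma> :: "'v \<Rightarrow> int" and n :: nat
  assume n: "n \<ge> 1" and n\<sigma>: "(\<lambda>x. int n * \<sigma> x) \<in> orbit_semigroup Q0 Q1 t h W"
  let ?A = "arrow_support Q1 W"
  have fin: "finite ?A" "finite Q0" and ends: "\<forall>a\<in>?A. t a \<in> Q0 \<and> h a \<in> Q0"
    using \<open>quiver Q0 Q1 t h\<close> by (auto simp: quiver_def arrow_support_def)
  have S: "\<tau> \<in> orbit_semigroup Q0 Q1 t h W \<longleftrightarrow> \<tau> \<in> weights Q0 \<and> gale_condition ?A t h Q0 \<tau>" for \<tau>
    using orbit_semigroup_net_outflows[OF \<open>quiver Q0 Q1 t h\<close> \<open>W \<in> rep1 Q1\<close>, of \<tau>]
      gale_theorem[OF fin ends, of \<tau>] by simp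
  have "\<sigma> \<in> weights Q0" using n\<sigma> n by (simp add: S weights_def)
  moreover have "gale_condition ?A t h Q0 (\<lambda>x. int n * \<sigma> x)" using n\<sigma> by (simp add: S)
  then have "gale_condition ?A t h Q0 \<sigma>" by (rule gale_condition_scale[OF n])
  ultimately show "\<sigma> \<in> orbit_semigroup Q0 Q1 t h W" by (simp add: S)
qed

end
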